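(* Let $\Gamma$ be a strongly $\delta$-hyperbolic directed graph (real $\delta\ge0$). Then every directed geodesic triangle $T$ in $\Gamma$ can be tessellated by five directed geodesic triangles (some of which may be trivial triangles with a single vertex), each of size at most $\frac{3}{4}\Sigma(T)+2\delta+1$.
   Context: Directed graphs may have loops and multiple edges; $d(u,v)$ is the length of a shortest directed path from $u$ to $v$ ($\infty$ if none). Out-ball $\overrightarrow{\mathcal{B}}_r(x)=\{y : d(x,y)\le r\}$, in-ball $\overleftarrow{\mathcal{B}}_r(x)=\{y : d(y,x)\le r\}$, extended to sets by union. A path $[x_0,\dots,x_n]$ has length $n$ and is a geodesic if $n=d(x_0,x_n)$. Paths are composable if the end of the first is the start of the second ($\circ$ is concatenation) and parallel if they share start and end. A directed geodesic triangle is an ordered triple $(p,q,r)$ of geodesics with $p,q$ composable and $p\circ q$ parallel to $r$; its size is $\Sigma(p,q,r)=|p|+|q|$. It is $\delta$-thin if every vertex of $r$ lies in $\overrightarrow{\mathcal{B}}_\delta(p)\cup\overleftarrow{\mathcal{B}}_\delta(q)$, every vertex of $p$ lies in $\overrightarrow{\mathcal{B}}_\delta(r)\cup\overleftarrow{\mathcal{B}}_\delta(q)$, and every vertex of $q$ lies in $\overrightarrow{\mathcal{B}}_\delta(p)\cup\overleftarrow{\mathcal{B}}_\delta(r)$. A directed graph is strongly $\delta$-hyperbolic if all its directed geodesic triangles are $\delta$-thin. Tessellation: given directed geodesic triangles $T_i=(p_i,q_i,r_i)$, form the directed $2$-complex on $\Gamma$ with one $2$-cell per $T_i$ having top $p_i\circ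 q_i$ and bottom $r_i$ (plus its formal inverse swapping top and bottom). Parallel paths are homotopic if one can be transformed into the other by finitely many steps each replacing a subpath equal to the top of a $2$-cell by its bottom or vice versa. The $T_i$ tessellate parallel paths $p,q$ if $p,q$ are homotopic in this complex, and tessellate a triangle $(p,q,r)$ if they tessellate $p\circ q$ and $r$. *)

theory Defs
  imports "Graph_Theory.Digraph" "Graph_Theory.Arc_Walk" "HOL-Library.Extended_Nat" Complex_Main
begin

text \<open>Directed graphs (loops and multiple arcs allowed) are Graph_Theory digraphs
  ('a vertices, 'b arcs, tail/head maps).  A path is a triple (start, arc list, end).\<close>

type_synonym ('a,'b) dpath = "'a \<times> 'b list \<times> 'a"

definition pstart :: "('a,'b) dpath \<Rightarrow> 'a" where "pstart P = fst P"
definition parcs :: "('a,'b) dpath \<Rightarrow> 'b list" where "parcs P = fst (snd P)"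
definition pend :: "('a,'b) dpath \<Rightarrow> 'a" where "pend P = snd (snd P)"

definition plen :: "('a,'b) dpath \<Rightarrow> nat" where "plen P = length (parcs P)"

definition is_path :: "('a,'b) pre_digraph \<Rightarrow> ('a,'b) dpath \<Rightarrow> bool" where
  "is_path G P \<longleftrightarrow> pre_digraph.awalk G (pstart P) (parcs P) (pend P)"

definition pverts :: "('a,'b) pre_digraph \<Rightarrow> ('a,'b) dpath \<Rightarrow> 'a set" where
  "pverts G P = set (pre_digraph.awalk_verts G (pstart P) (parcs P))"

definition pcomp :: "('a,'b) dpath \<Rightarrow> ('a,'b) dpath \<Rightarrow> ('a,'b) dpath" where
  "pcomp P Q = (pstart P, parcs P @ parcs Q, pend Q)"

text \<open>Directed distance (infinity if there is no directed path).\<close>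
definition ddist :: "('a,'b) pre_digraph \<Rightarrow> 'a \<Rightarrow> 'a \<Rightarrow> enat" where
  "ddist G u v = (INF p \<in> {p. pre_digraph.awalk G u p v}. enat (length p))"

definition geodesic :: "('a,'b) pre_digraph \<Rightarrow> ('a,'b) dpath \<Rightarrow> bool" where
  "geodesic G P \<longleftrightarrow> is_path G P \<and> enat (plen P) = ddist G (pstart P) (pend P)"

definition dist_le :: "('a,'b) pre_digraph \<Rightarrow> 'a \<Rightarrow> 'a \<Rightarrow> real \<Rightarrow> bool" where
  "dist_le G x y r \<longleftrightarrow> (\<exists>n. ddist G x y = enat n \<and> real n \<le> r)"

definition out_ball :: "('a,'b) pre_digraph \<Rightarrow> 'a set \<Rightarrow> real \<Rightarrow> 'a set" where
  "out_ball G S r = {y \<in> verts G. \<exists>x\<in>S. dist_le G x y r}"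

definition in_ball :: "('a,'b) pre_digraph \<Rightarrow> 'a set \<Rightarrow> real \<Rightarrow> 'a set" where
  "in_ball G S r = {y \<in> verts G. \<exists>x\<in>S. dist_le G y x r}"

type_synonym ('a,'b) dtriangle = "('a,'b) dpath \<times> ('a,'b) dpath \<times> ('a,'b) dpath"

definition geo_triangle :: "('a,'b) pre_digraph \<Rightarrow> ('a,'b) dtriangle \<Rightarrow> bool" where
  "geo_triangle G T \<longleftrightarrow> (case T of (p,q,r) \<Rightarrow>
     geodesic G p \<and> geodesic G q \<and> geodesic G r \<and>
     pend p = pstart q \<and> pstart r = pstart p \<and> pend r = pend q)"

definition tri_size :: "('a,'b) dtriangle \<Rightarrow> nat" where
  "tri_size T = (case T of (p,q,r) \<Rightarrow> plen p + plen q)"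

definition thin_triangle :: "('a,'b) pre_digraph \<Rightarrow> real \<Rightarrow> ('a,'b) dtriangle \<Rightarrow> bool" where
  "thin_triangle G \<delta> T \<longleftrightarrow> (case T of (p,q,r) \<Rightarrow>
     pverts G r \<subseteq> out_ball G (pverts G p) \<delta> \<union> in_ball G (pverts G q) \<delta> \<and>
     pverts G p \<subseteq> out_ball G (pverts G r) \<delta> \<union> in_ball G (pverts G q) \<delta> \<and>
     pverts G q \<subseteq> out_ball G (pverts G p) \<delta> \<union> in_ball G (pverts G r) \<delta>)"

definition strongly_hyperbolic :: "('a,'b) pre_digraph \<Rightarrow> real \<Rightarrow> bool" where
  "strongly_hyperbolic G \<delta> \<longleftrightarrow> (\<forall>T. geo_triangle G T \<longrightarrow> thin_triangle G \<delta> T)"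

text \<open>One elementary homotopy step in the 2-complex with one 2-cell per triangle of Ts:
  inside path P, a subpath equal to the top p\<circ>q of a cell (starting at the cell's
  start vertex) is replaced by its bottom r, or vice versa.\<close>
definition cell_step :: "('a,'b) pre_digraph \<Rightarrow> ('a,'b) dtriangle list \<Rightarrow>
    ('a,'b) dpath \<Rightarrow> ('a,'b) dpath \<Rightarrow> bool" where
  "cell_step G Ts P P' \<longleftrightarrow> pstart P' = pstart P \<and> pend P' = pend P \<and>
     (\<exists>T\<in>set Ts. case T of (p,q,r) \<Rightarrow>
        (\<exists>a b x. pre_digraph.awalk G (pstart P) a x \<and> x = pstart p \<and>
           ((parcs P = a @ parcs (pcomp p q) @ b \<and> parcs P' = a @ parcs r @ b) \<or>
            (parcs P = a @ parcs r @ b \<and> parcs P' = a @ parcs (pcomp p q) @ b))))"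

definition homotopic :: "('a,'b) pre_digraph \<Rightarrow> ('a,'b) dtriangle list \<Rightarrow>
    ('a,'b) dpath \<Rightarrow> ('a,'b) dpath \<Rightarrow> bool" where
  "homotopic G Ts P P' \<longleftrightarrow> (cell_step G Ts)\<^sup>*\<^sup>* P P'"

definition tessellates_triangle :: "('a,'b) pre_digraph \<Rightarrow> ('a,'b) dtriangle list \<Rightarrow>
    ('a,'b) dtriangle \<Rightarrow> bool" where
  "tessellates_triangle G Ts T \<longleftrightarrow> (case T of (p,q,r) \<Rightarrow> homotopic G Ts (pcomp p q) r)"

end

theory Submission
  imports Defs
begin

text \<open>
  Let \<open>S = |p| + |q|\<close> and suppose \<open>|q| \<le> |p|\<close>; the other case is the mirror image, cutting
  \<open>q\<close> at distance \<open>\<lceil>S/4\<rceil>\<close> from its end. Cut \<open>p\<close> at the vertex \<open>w\<close> at distance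
  \<open>\<lceil>S/4\<rceil>\<close> from its start. By thinness a geodesic chord of length at most \<open>\<delta>\<close> joins \<open>w\<close>
  to a vertex of \<open>q\<close> or comes to \<open>w\<close> from a vertex of \<open>r\<close>. A chord to \<open>q\<close> cuts off the corner
  triangle at the end of \<open>p\<close>, of size at most \<open>3S/4\<close>, and leaves a quadrilateral that one diagonal
  splits into two triangles. A chord from \<open>r\<close> leaves a quadrilateral (two triangles) and a
  triangle with one side of length at most \<open>\<delta>\<close>; cutting its long side at the midpoint and applying
  thinness once more splits it into three triangles of size about half that side plus \<open>2\<delta>\<close>.
  Missing tiles are filled up with trivial one-vertex triangles.
\<close>

subsection \<open>Geodesics\<close>

context wf_digraph begin

lemma ddist_le_length: "awalk u q v \<Longrightarrow> ddist G u v \<le> enat (length q)"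
  unfolding ddist_def by (rule INF_lower) simp

lemma geodesic_iff_shortest:
  "geodesic G (u,A,v) \<longleftrightarrow> awalk u A v \<and> (\<forall>q. awalk u q v \<longrightarrow> length A \<le> length q)"
proof
  assume "geodesic G (u,A,v)"
  then have walk: "awalk u A v" and len: "enat (length A) = ddist G u v"
    by (auto simp: geodesic_def is_path_def plen_def parcs_def pstart_def pend_def)
  have "length A \<le> length q" if "awalk u q v" for q
    using len ddist_le_length[OF that] by (metis enat_ord_simps(1))
  with walk show "awalk u A v \<and> (\<forall>q. awalk u q v \<longrightarrow> length A \<le> length q)" by blast
next
  assume shortest: "awalk u A v \<and> (\<forall>q. awalk u q v \<longrightarrow> length A \<le> length q)"
  have "ddist G u v = enat (length A)"
  proof (rule antisym)
    show "ddist G u v \<le> enat (length A)" using shortest ddist_le_length by blast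
    show "enat (length A) \<le> ddist G u v" unfolding ddist_def
      by (rule INF_greatest) (use shortest in auto)
  qed
  with shortest show "geodesic G (u,A,v)"
    by (auto simp: geodesic_def is_path_def plen_def parcs_def pstart_def pend_def)
qed

lemma geodesic_awalk: "geodesic G (u,A,v) \<Longrightarrow> awalk u A v"
  by (simp add: geodesic_iff_shortest)

lemma geodesic_shorter_than:
  assumes "awalk u A v"
  obtains D where "geodesic G (u,D,v)" "length D \<le> length A"
proof -
  obtain D where "awalk u D v" "\<forall>q. awalk u q v \<longrightarrow> length D \<le> length q"
    using ex_has_least_nat[of "\<lambda>D. awalk u D v" A length] assms by blast
  with assms that show ?thesis by (auto simp: geodesic_iff_shortest)
qed

lemma geodesic_shortcut:
  assumes "geodesic G (u,A,v)" "geodesic G (v,B,w)"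
  obtains D where "geodesic G (u,D,w)" "length D \<le> length A + length B"
  using geodesic_shorter_than[OF awalk_appendI[OF assms[THEN geodesic_awalk]]] by auto

lemma geodesic_if_dist_le:
  assumes "dist_le G u v d"
  obtains D where "geodesic G (u,D,v)" "real (length D) \<le> d"
proof -
  obtain n where n: "ddist G u v = enat n" "real n \<le> d"
    using assms by (auto simp: dist_le_def)
  have "{q. awalk u q v} \<noteq> {}"
  proof
    assume "{q. awalk u q v} = {}"
    then have "ddist G u v = \<infinity>" unfolding ddist_def by (simp add: top_enat_def)
    with n show False by simp
  qed
  then obtain q where "awalk u q v" by blast
  then obtain D where D: "geodesic G (u,D,v)" by (rule geodesic_shorter_than)
  then have "enat (length D) = ddist G u v"
    by (auto simp: geodesic_def plen_def parcs_def pstart_def pend_def)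
  with n D that show ?thesis by auto
qed

lemma geodesic_append_split:
  assumes "geodesic G (u, A1 @ A2, v)" "awalk u A1 w"
  shows "geodesic G (u,A1,w)" "geodesic G (w,A2,v)"
proof -
  have shortest: "\<forall>q. awalk u q v \<longrightarrow> length (A1 @ A2) \<le> length q"
    using assms(1) by (simp add: geodesic_iff_shortest)
  have A2: "awalk w A2 v"
    using assms geodesic_awalk by (metis awalk_append_iff awalk_ends)
  show "geodesic G (u,A1,w)" unfolding geodesic_iff_shortest
  proof (intro conjI allI impI)
    fix q assume "awalk u q w"
    then have "length (A1 @ A2) \<le> length (q @ A2)" using shortest A2 awalk_appendI by blast
    then show "length A1 \<le> length q" by simp
  qed (rule assms(2))
  show "geodesic G (w,A2,v)" unfolding geodesic_iff_shortest
  proof (intro conjI allI impI)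
    fix q assume "awalk w q v"
    then have "length (A1 @ A2) \<le> length (A1 @ q)" using shortest assms(2) awalk_appendI by blast
    then show "length A2 \<le> length q" by simp
  qed (rule A2)
qed

lemma geodesic_split_at_vertex:
  assumes "geodesic G (u,A,v)" "w \<in> set (awalk_verts u A)"
  obtains A1 A2 where "A = A1 @ A2" "geodesic G (u,A1,w)" "geodesic G (w,A2,v)"
  using awalk_decomp[OF geodesic_awalk[OF assms(1)] assms(2)] geodesic_append_split assms(1)
  by metis

lemma geodesic_split_at_length:
  assumes "geodesic G (u,A,v)" "k \<le> length A"
  obtains w A1 A2 where "A = A1 @ A2" "length A1 = k" "w \<in> set (awalk_verts u A)"
    "geodesic G (u,A1,w)" "geodesic G (w,A2,v)"
proof -
  have walk: "awalk u (take k A @ drop k A) v" using geodesic_awalk[OF assms(1)] by simp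
  define w where "w = awlast u (take k A)"
  have prefix: "awalk u (take k A) w" and suffix: "awalk w (drop k A) v"
    using walk[unfolded awalk_append_iff] unfolding w_def by blast+
  have "w \<in> set (awalk_verts u A)"
    using awalk_verts_append2[OF walk] hd_in_awalk_verts(1)[OF suffix] w_def by simp
  with prefix show ?thesis
    using that[of "take k A" "drop k A" w] assms geodesic_append_split[of u "take k A" "drop k A" v w]
    by simp
qed

lemma geodesic_split_halves:
  assumes "geodesic G (u,A,v)"
  obtains w A1 A2 where "A = A1 @ A2"
    "2 * real (length A1) \<le> real (length A) + 1" "2 * real (length A2) \<le> real (length A) + 1"
    "w \<in> set (awalk_verts u A)" "geodesic G (u,A1,w)" "geodesic G (w,A2,v)"
proof -
  obtain w A1 A2 where "A = A1 @ A2" "length A1 = length A div 2" "w \<in> set (awalk_verts u A)"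
    "geodesic G (u,A1,w)" "geodesic G (w,A2,v)"
    using geodesic_split_at_length[OF assms, of "length A div 2"] by (metis div_le_dividend)
  moreover from this(1,2) have "2 * length A1 \<le> length A + 1" "2 * length A2 \<le> length A + 1"
    by simp_all
  then have "2 * real (length A1) \<le> real (length A) + 1" "2 * real (length A2) \<le> real (length A) + 1"
    by linarith+
  ultimately show ?thesis using that by blast
qed

lemma geodesic_length_le_triangle:
  "geodesic G (x,P,y) \<Longrightarrow> geodesic G (y,Q,z) \<Longrightarrow> geodesic G (x,R,z) \<Longrightarrow>
    length R \<le> length P + length Q"
  by (metis awalk_appendI geodesic_awalk geodesic_iff_shortest length_append)

lemma geodesic_Nil: "u \<in> verts G \<Longrightarrow> geodesic G (u,[],u)"
  by (simp add: geodesic_iff_shortest awalk_Nil_iff)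

end

subsection \<open>Thin triangles\<close>

context wf_digraph begin

lemma thin_triangle_of_geodesics:
  assumes "strongly_hyperbolic G \<delta>"
    and "geodesic G (x,P,y)" "geodesic G (y,Q,z)" "geodesic G (x,R,z)"
  shows "thin_triangle G \<delta> ((x,P,y),(y,Q,z),(x,R,z))"
  using assms by (auto simp: strongly_hyperbolic_def geo_triangle_def pstart_def pend_def)

lemma vertex_on_first_side_near:
  assumes "strongly_hyperbolic G \<delta>"
    and P: "geodesic G (x,P,y)" and Q: "geodesic G (y,Q,z)" and R: "geodesic G (x,R,z)"
    and "w \<in> set (awalk_verts x P)"
  obtains (second_side) Q1 Q2 v g where "Q = Q1 @ Q2" "geodesic G (y,Q1,v)" "geodesic G (v,Q2,z)"
      "geodesic G (w,g,v)" "real (length g) \<le> \<delta>"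
    | (third_side) R1 R2 v g where "R = R1 @ R2" "geodesic G (x,R1,v)" "geodesic G (v,R2,z)"
      "geodesic G (v,g,w)" "real (length g) \<le> \<delta>"
proof -
  have "(\<exists>v\<in>set (awalk_verts x R). dist_le G v w \<delta>) \<or> (\<exists>v\<in>set (awalk_verts y Q). dist_le G w v \<delta>)"
    using thin_triangle_of_geodesics[OF assms(1) P Q R] assms(5)
    by (auto simp: thin_triangle_def pverts_def pstart_def parcs_def out_ball_def in_ball_def)
  then show ?thesis
  proof (elim disjE bexE)
    fix v assume "v \<in> set (awalk_verts x R)" "dist_le G v w \<delta>"
    then show ?thesis
      by (elim geodesic_split_at_vertex[OF R] geodesic_if_dist_le) (rule third_side; assumption)
  next
    fix v assume "v \<in> set (awalk_verts y Q)" "dist_le G w v \<delta>"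
    then show ?thesis
      by (elim geodesic_split_at_vertex[OF Q] geodesic_if_dist_le) (rule second_side; assumption)
  qed
qed

lemma vertex_on_second_side_near:
  assumes "strongly_hyperbolic G \<delta>"
    and P: "geodesic G (x,P,y)" and Q: "geodesic G (y,Q,z)" and R: "geodesic G (x,R,z)"
    and "w \<in> set (awalk_verts y Q)"
  obtains (first_side) P1 P2 v g where "P = P1 @ P2" "geodesic G (x,P1,v)" "geodesic G (v,P2,y)"
      "geodesic G (v,g,w)" "real (length g) \<le> \<delta>"
    | (third_side) R1 R2 v g where "R = R1 @ R2" "geodesic G (x,R1,v)" "geodesic G (v,R2,z)"
      "geodesic G (w,g,v)" "real (length g) \<le> \<delta>"
proof -
  have "(\<exists>v\<in>set (awalk_verts x P). dist_le G v w \<delta>) \<or> (\<exists>v\<in>set (awalk_verts x R). dist_le G w v \<delta>)"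
    using thin_triangle_of_geodesics[OF assms(1) P Q R] assms(5)
    by (auto simp: thin_triangle_def pverts_def pstart_def parcs_def out_ball_def in_ball_def)
  then show ?thesis
  proof (elim disjE bexE)
    fix v assume "v \<in> set (awalk_verts x P)" "dist_le G v w \<delta>"
    then show ?thesis
      by (elim geodesic_split_at_vertex[OF P] geodesic_if_dist_le) (rule first_side; assumption)
  next
    fix v assume "v \<in> set (awalk_verts x R)" "dist_le G w v \<delta>"
    then show ?thesis
      by (elim geodesic_split_at_vertex[OF R] geodesic_if_dist_le) (rule third_side; assumption)
  qed
qed

end

subsection \<open>Homotopy of paths\<close>

context wf_digraph begin

lemma cell_step_iff:
  "cell_step G Ts P P' \<longleftrightarrow> pstart P' = pstart P \<and> pend P' = pend P \<and>
     (\<exists>(p,q,r)\<in>set Ts. \<exists>a b. awalk (pstart P) a (pstart p) \<and>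
        {parcs P, parcs P'} = {a @ parcs p @ parcs q @ b, a @ parcs r @ b})"
  unfolding cell_step_def doubleton_eq_iff by (simp add: pcomp_def parcs_def)

lemma homotopic_sym: "homotopic G Ts P P' \<Longrightarrow> homotopic G Ts P' P"
proof -
  have "symp (cell_step G Ts)"
    unfolding cell_step_iff by (rule sympI) (auto simp: insert_commute)
  then show "homotopic G Ts P P' \<Longrightarrow> homotopic G Ts P' P"
    unfolding homotopic_def by (metis symp_rtranclp sympD)
qed

lemma homotopic_trans: "homotopic G Ts P P' \<Longrightarrow> homotopic G Ts P' P'' \<Longrightarrow> homotopic G Ts P P''"
  unfolding homotopic_def by (rule rtranclp_trans)

lemma homotopic_mono: "set Ts \<subseteq> set Ts' \<Longrightarrow> homotopic G Ts P P' \<Longrightarrow> homotopic G Ts' P P'"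
proof -
  assume "set Ts \<subseteq> set Ts'"
  then have "cell_step G Ts P P' \<longrightarrow> cell_step G Ts' P P'" for P P'
    unfolding cell_step_iff by blast
  then show "homotopic G Ts P P' \<Longrightarrow> homotopic G Ts' P P'"
    unfolding homotopic_def using mono_rtranclp[of "cell_step G Ts" "cell_step G Ts'"] by blast
qed

lemma homotopic_cell:
  assumes "((u,A,v),(v,B,w),(u,C,w)) \<in> set Ts" "u \<in> verts G"
  shows "homotopic G Ts (u, A @ B, w) (u, C, w)"
proof -
  have "cell_step G Ts (u, A @ B, w) (u, C, w)"
    unfolding cell_step_iff pstart_def pend_def parcs_def
    using assms by (intro conjI bexI[OF _ assms(1)]) (auto intro!: exI[of _ "[]"] simp: awalk_Nil_iff)
  then show ?thesis by (simp add: homotopic_def)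
qed

lemma homotopic_context:
  assumes "homotopic G Ts (v,A,w) (v,C,w)" and pre: "awalk u pre v"
  shows "homotopic G Ts (u, pre @ A @ suf, z) (u, pre @ C @ suf, z)"
proof -
  define f where "f P = (u, pre @ parcs P @ suf, z)" for P :: "('a,'b) dpath"
  have lift: "cell_step G Ts (f P) (f P')" if step: "cell_step G Ts P P'" and start: "pstart P = v" for P P'
  proof -
    obtain p q r a b where T: "(p,q,r) \<in> set Ts" and a: "awalk v a (pstart p)"
      and arcs: "{parcs P, parcs P'} = {a @ parcs p @ parcs q @ b, a @ parcs r @ b}"
      using step start unfolding cell_step_iff by blast
    have arcs': "{parcs (f P), parcs (f P')} =
        {(pre @ a) @ parcs p @ parcs q @ (b @ suf), (pre @ a) @ parcs r @ (b @ suf)}"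
      using arcs unfolding f_def parcs_def doubleton_eq_iff by auto
    have "awalk (pstart (f P)) (pre @ a) (pstart p)"
      using awalk_appendI[OF pre a] by (simp only: f_def pstart_def fst_conv)
    moreover have "pstart (f P') = pstart (f P)" "pend (f P') = pend (f P)"
      by (simp_all add: f_def pstart_def pend_def)
    ultimately show ?thesis
      using T arcs' unfolding cell_step_iff by blast
  qed
  have "(cell_step G Ts)\<^sup>*\<^sup>* (f (v,A,w)) (f P) \<and> pstart P = v"
    if "(cell_step G Ts)\<^sup>*\<^sup>* (v,A,w) P" for P
    using that
  proof (induction rule: rtranclp_induct)
    case base then show ?case by (simp add: pstart_def)
  next
    case (step P P')
    then have "pstart P' = v" by (simp add: cell_step_iff)
    with step lift show ?case by (meson rtranclp.rtrancl_into_rtrancl)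
  qed
  from this[of "(v,C,w)"] assms(1) show ?thesis
    by (simp add: homotopic_def f_def parcs_def)
qed

end

subsection \<open>Tessellations with few small tiles\<close>

definition tessellable ::
    "('a,'b) pre_digraph \<Rightarrow> real \<Rightarrow> nat \<Rightarrow> ('a,'b) dpath \<Rightarrow> ('a,'b) dpath \<Rightarrow> bool"
  where "tessellable G s n P P' \<longleftrightarrow> (\<exists>Ts. length Ts \<le> n \<and>
    (\<forall>T\<in>set Ts. geo_triangle G T \<and> real (tri_size T) \<le> s) \<and> homotopic G Ts P P')"

context wf_digraph begin

lemma tessellable_cell:
  assumes "geodesic G (u,A,v)" "geodesic G (v,B,w)" "geodesic G (u,C,w)"
    and "real (length A) + real (length B) \<le> s"
  shows "tessellable G s 1 (u, A @ B, w) (u, C, w)"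
proof -
  let ?T = "((u,A,v),(v,B,w),(u,C,w))"
  have "geo_triangle G ?T" "real (tri_size ?T) \<le> s"
    using assms by (auto simp: geo_triangle_def tri_size_def plen_def parcs_def pstart_def pend_def)
  moreover have "homotopic G [?T] (u, A @ B, w) (u, C, w)"
    using homotopic_cell awalk_hd_in_verts[OF geodesic_awalk[OF assms(1)]] by simp
  ultimately show ?thesis unfolding tessellable_def by (intro exI[of _ "[?T]"]) simp
qed

lemma tessellable_sym: "tessellable G s n P P' \<Longrightarrow> tessellable G s n P' P"
  unfolding tessellable_def using homotopic_sym by blast

lemma tessellable_trans:
  assumes "tessellable G s m P P'" "tessellable G s n P' P''"
  shows "tessellable G s (m + n) P P''"
proof -
  obtain Ts Ts' where "length Ts \<le> m" "\<forall>T\<in>set Ts. geo_triangle G T \<and> real (tri_size T) \<le> s"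
    and h: "homotopic G Ts P P'"
    and "length Ts' \<le> n" "\<forall>T\<in>set Ts'. geo_triangle G T \<and> real (tri_size T) \<le> s"
    and h': "homotopic G Ts' P' P''"
    using assms unfolding tessellable_def by blast
  moreover have "homotopic G (Ts @ Ts') P P''"
    using homotopic_trans[OF homotopic_mono[OF _ h] homotopic_mono[OF _ h']] by simp
  ultimately show ?thesis
    unfolding tessellable_def by (intro exI[of _ "Ts @ Ts'"]) auto
qed

lemma tessellable_mono: "m \<le> n \<Longrightarrow> tessellable G s m P P' \<Longrightarrow> tessellable G s n P P'"
  unfolding tessellable_def using order_trans by blast

lemma tessellable_context:
  "awalk u pre v \<Longrightarrow> tessellable G s n (v,A,w) (v,C,w) \<Longrightarrow>
    tessellable G s n (u, pre @ A @ suf, z) (u, pre @ C @ suf, z)"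
  unfolding tessellable_def using homotopic_context by blast

lemma tessellable_append:
  assumes "u \<in> verts G" "tessellable G s n (u,A,w) (u,C,w)"
  shows "tessellable G s n (u, A @ suf, z) (u, C @ suf, z)"
  using tessellable_context[of u "[]" u] assms by (simp add: awalk_Nil_iff)

lemma tessellable_quadrilateral:
  assumes A: "geodesic G (u,A,v)" and B: "geodesic G (v,B,w)" and C: "geodesic G (w,C,z)"
    and D: "geodesic G (u,D,z)" and size: "real (length A) + real (length B) + real (length C) \<le> s"
  shows "tessellable G s 2 (u, A @ B @ C, z) (u, D, z)"
proof -
  obtain H where H: "geodesic G (u,H,w)" "length H \<le> length A + length B"
    using geodesic_shortcut[OF A B] .
  have "tessellable G s 1 (u, A @ B, w) (u, H, w)"
    using size by (intro tessellable_cell[OF A B H(1)]) simp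
  then have "tessellable G s 1 (u, A @ B @ C, z) (u, H @ C, z)"
    using tessellable_append[OF awalk_hd_in_verts[OF geodesic_awalk[OF A]]] by fastforce
  moreover have "tessellable G s 1 (u, H @ C, z) (u, D, z)"
    using size H(2) by (intro tessellable_cell[OF H(1) C D]) linarith
  ultimately show ?thesis using tessellable_trans by (metis one_add_one)
qed

lemma tessellation_if_tessellable:
  assumes "tessellable G s n P P'" and "0 \<le> s" and "pstart P \<in> verts G"
  shows "\<exists>Ts. length Ts = n \<and> (\<forall>T\<in>set Ts. geo_triangle G T \<and> real (tri_size T) \<le> s) \<and>
    homotopic G Ts P P'"
proof -
  obtain Ts where Ts: "length Ts \<le> n" "\<forall>T\<in>set Ts. geo_triangle G T \<and> real (tri_size T) \<le> s"
    "homotopic G Ts P P'"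
    using assms(1) unfolding tessellable_def by blast
  define u where "u = pstart P"
  define trivial :: "('a,'b) dtriangle" where "trivial = ((u,[],u),(u,[],u),(u,[],u))"
  have "geo_triangle G trivial" "tri_size trivial = 0"
    using geodesic_Nil assms(3)
    by (simp_all add: trivial_def u_def geo_triangle_def tri_size_def plen_def parcs_def pstart_def pend_def)
  define Ts' where "Ts' = Ts @ replicate (n - length Ts) trivial"
  have "\<forall>T\<in>set Ts'. geo_triangle G T \<and> real (tri_size T) \<le> s"
    using Ts(2) \<open>geo_triangle G trivial\<close> \<open>tri_size trivial = 0\<close> assms(2) by (auto simp: Ts'_def)
  moreover have "homotopic G Ts' P P'"
    by (rule homotopic_mono[OF _ Ts(3)]) (simp add: Ts'_def)
  moreover have "length Ts' = n"
    using Ts(1) by (simp add: Ts'_def)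
  ultimately show ?thesis by blast
qed

subsection \<open>Cutting thin triangles along chords\<close>

text \<open>
  In a triangle \<open>(p,q,r)\<close> from \<open>x\<close> via \<open>y\<close> to \<open>z\<close>, a chord \<open>g\<close> is a geodesic joining
  vertices of two sides, oriented as thinness provides it: from \<open>p\<close> to \<open>q\<close>, from \<open>r\<close> to \<open>p\<close>,
  or from \<open>q\<close> to \<open>r\<close>. The chord cuts off one corner; the rest is a quadrilateral.
\<close>

lemma tessellable_chord_first_to_second:
  assumes P1: "geodesic G (x,P1,a)" and P2: "geodesic G (a,P2,y)"
    and Q1: "geodesic G (y,Q1,b)" and Q2: "geodesic G (b,Q2,z)"
    and R: "geodesic G (x,R,z)" and g: "geodesic G (a,g,b)"
    and corner: "real (length P2) + real (length Q1) \<le> s"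
    and rest: "real (length P1) + real (length g) + real (length Q2) \<le> s"
  shows "tessellable G s 3 (x, P1 @ P2 @ Q1 @ Q2, z) (x, R, z)"
proof -
  have "tessellable G s 1 (a, P2 @ Q1, b) (a, g, b)"
    using corner by (rule tessellable_cell[OF P2 Q1 g])
  from tessellable_context[OF geodesic_awalk[OF P1] this, of Q2 z]
  have "tessellable G s 1 (x, P1 @ (P2 @ Q1) @ Q2, z) (x, P1 @ g @ Q2, z)" .
  moreover have "tessellable G s 2 (x, P1 @ g @ Q2, z) (x, R, z)"
    using rest by (rule tessellable_quadrilateral[OF P1 g Q2 R])
  ultimately show ?thesis using tessellable_trans by fastforce
qed

lemma tessellable_chord_third_to_first:
  assumes small: "tessellable G s m (x, R1 @ g, b) (x, P1, b)"
    and R1: "geodesic G (x,R1,a)" and g: "geodesic G (a,g,b)" and P2: "geodesic G (b,P2,y)"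
    and Q: "geodesic G (y,Q,z)" and R2: "geodesic G (a,R2,z)"
    and rest: "real (length g) + real (length P2) + real (length Q) \<le> s"
  shows "tessellable G s (m + 2) (x, P1 @ P2 @ Q, z) (x, R1 @ R2, z)"
proof -
  have "tessellable G s m (x, P1 @ P2 @ Q, z) (x, (R1 @ g) @ P2 @ Q, z)"
    using tessellable_append[OF awalk_hd_in_verts[OF geodesic_awalk[OF R1]] tessellable_sym[OF small]] .
  moreover have "tessellable G s 2 (a, g @ P2 @ Q, z) (a, R2, z)"
    using rest by (rule tessellable_quadrilateral[OF g P2 Q R2])
  from tessellable_context[OF geodesic_awalk[OF R1] this, of "[]" z]
  have "tessellable G s 2 (x, R1 @ (g @ P2 @ Q) @ [], z) (x, R1 @ R2 @ [], z)" .
  ultimately show ?thesis using tessellable_trans by fastforce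
qed

lemma tessellable_chord_second_to_third:
  assumes small: "tessellable G s m (a, g @ R2, z) (a, Q2, z)"
    and P: "geodesic G (x,P,y)" and Q1: "geodesic G (y,Q1,a)" and g: "geodesic G (a,g,b)"
    and R1: "geodesic G (x,R1,b)" and R2: "geodesic G (b,R2,z)"
    and rest: "real (length P) + real (length Q1) + real (length g) \<le> s"
  shows "tessellable G s (m + 2) (x, P @ Q1 @ Q2, z) (x, R1 @ R2, z)"
proof -
  have "awalk x (P @ Q1) a"
    using awalk_appendI[OF P[THEN geodesic_awalk] Q1[THEN geodesic_awalk]] .
  from tessellable_context[OF this tessellable_sym[OF small], of "[]" z]
  have "tessellable G s m (x, (P @ Q1) @ Q2 @ [], z) (x, (P @ Q1) @ (g @ R2) @ [], z)" .
  moreover have "tessellable G s 2 (x, P @ Q1 @ g, b) (x, R1, b)"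
    using rest by (rule tessellable_quadrilateral[OF P Q1 g R1])
  from tessellable_append[OF awalk_hd_in_verts[OF geodesic_awalk[OF P]] this, of R2 z]
  have "tessellable G s 2 (x, (P @ Q1 @ g) @ R2, z) (x, R1 @ R2, z)" .
  ultimately show ?thesis using tessellable_trans by fastforce
qed

lemma tessellable_short_second_side:
  assumes SH: "strongly_hyperbolic G \<delta>"
    and A: "geodesic G (x,A,v)" and C: "geodesic G (v,C,w)" and D: "geodesic G (x,D,w)"
    and short: "real (length C) \<le> \<delta>"
    and bound_A: "real (length A) / 2 + 2 * \<delta> + 1 / 2 \<le> s" and bound_D: "real (length D) + \<delta> \<le> s"
  shows "tessellable G s 3 (x, A @ C, w) (x, D, w)"
proof -
  obtain v' A1 A2 where A12: "A = A1 @ A2" "2 * real (length A1) \<le> real (length A) + 1"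
      "2 * real (length A2) \<le> real (length A) + 1"
    and v': "v' \<in> set (awalk_verts x A)" and A1: "geodesic G (x,A1,v')" and A2: "geodesic G (v',A2,v)"
    using geodesic_split_halves[OF A] .
  have "0 \<le> \<delta>" using short of_nat_0_le_iff order_trans by blast
  from SH A C D v' show ?thesis
  proof (cases rule: vertex_on_first_side_near)
    case (second_side C1 C2 u g)
    have "real (length C1) \<le> real (length C)" "real (length C2) \<le> real (length C)"
      using second_side(1) by simp_all
    then have "real (length A2) + real (length C1) \<le> s"
      "real (length A1) + real (length g) + real (length C2) \<le> s"
      using A12 second_side(5) short bound_A \<open>0 \<le> \<delta>\<close> by linarith+
    then show ?thesis
      using tessellable_chord_first_to_second[OF A1 A2 second_side(2,3) D second_side(4)]
        A12(1) second_side(1) by simp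
  next
    case (third_side D1 D2 u g)
    have "real (length D1) \<le> real (length D)"
      using third_side(1) by simp
    then have "tessellable G s 1 (x, D1 @ g, v') (x, A1, v')"
      using third_side(5) bound_D by (intro tessellable_cell[OF third_side(2,4) A1]) linarith
    moreover have "real (length g) + real (length A2) + real (length C) \<le> s"
      using A12 third_side(5) short bound_A \<open>0 \<le> \<delta>\<close> by linarith
    ultimately have "tessellable G s (1 + 2) (x, A1 @ A2 @ C, w) (x, D1 @ D2, w)"
      by (rule tessellable_chord_third_to_first[OF _ third_side(2,4) A2 C third_side(3)])
    then show ?thesis
      using A12(1) third_side(1) by (simp add: numeral_3_eq_3)
  qed
qed

lemma tessellable_short_first_side:
  assumes SH: "strongly_hyperbolic G \<delta>"
    and C: "geodesic G (w,C,v)" and A: "geodesic G (v,A,z)" and D: "geodesic G (w,D,z)"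
    and short: "real (length C) \<le> \<delta>"
    and bound_A: "real (length A) / 2 + 2 * \<delta> + 1 / 2 \<le> s" and bound_D: "real (length D) + \<delta> \<le> s"
  shows "tessellable G s 3 (w, C @ A, z) (w, D, z)"
proof -
  obtain v' A1 A2 where A12: "A = A1 @ A2" "2 * real (length A1) \<le> real (length A) + 1"
      "2 * real (length A2) \<le> real (length A) + 1"
    and v': "v' \<in> set (awalk_verts v A)" and A1: "geodesic G (v,A1,v')" and A2: "geodesic G (v',A2,z)"
    using geodesic_split_halves[OF A] .
  have "0 \<le> \<delta>" using short of_nat_0_le_iff order_trans by blast
  from SH C A D v' show ?thesis
  proof (cases rule: vertex_on_second_side_near)
    case (first_side C1 C2 u g)
    have "real (length C1) \<le> real (length C)" "real (length C2) \<le> real (length C)"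
      using first_side(1) by simp_all
    then have "real (length C2) + real (length A1) \<le> s"
      "real (length C1) + real (length g) + real (length A2) \<le> s"
      using A12 first_side(5) short bound_A \<open>0 \<le> \<delta>\<close> by linarith+
    then show ?thesis
      using tessellable_chord_first_to_second[OF first_side(2,3) A1 A2 D first_side(4)]
        A12(1) first_side(1) by simp
  next
    case (third_side D1 D2 u g)
    have "real (length D2) \<le> real (length D)"
      using third_side(1) by simp
    then have "tessellable G s 1 (v', g @ D2, z) (v', A2, z)"
      using third_side(5) bound_D by (intro tessellable_cell[OF third_side(4,3) A2]) linarith
    moreover have "real (length C) + real (length A1) + real (length g) \<le> s"
      using A12 third_side(5) short bound_A \<open>0 \<le> \<delta>\<close> by linarith
    ultimately have "tessellable G s (1 + 2) (w, C @ A1 @ A2, z) (w, D1 @ D2, z)"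
      by (rule tessellable_chord_second_to_third[OF _ C A1 third_side(4,2,3)])
    then show ?thesis
      using A12(1) third_side(1) by (simp add: numeral_3_eq_3)
  qed
qed

lemma tessellable_long_first_side:
  assumes SH: "strongly_hyperbolic G \<delta>"
    and P: "geodesic G (x,P,y)" and Q: "geodesic G (y,Q,z)" and R: "geodesic G (x,R,z)"
    and longer: "length Q \<le> length P"
  shows "tessellable G (3/4 * real (length P + length Q) + 2 * \<delta> + 1) 5 (x, P @ Q, z) (x, R, z)"
    (is "tessellable G ?s 5 _ _")
proof -
  define j where "j = (length P + length Q + 3) div 4"
  have j: "real (length P + length Q) \<le> 4 * real j" "4 * real j \<le> real (length P + length Q) + 3"
    "j \<le> length P"
    using longer unfolding j_def by linarith+
  obtain w P1 P2 where P12: "P = P1 @ P2" "length P1 = j" and w: "w \<in> set (awalk_verts x P)"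
    and P1: "geodesic G (x,P1,w)" and P2: "geodesic G (w,P2,y)"
    using geodesic_split_at_length[OF P j(3)] .
  have lengths: "real (length P + length Q) = real (length P) + real (length Q)"
    "real (length P) = real j + real (length P2)" "real (length P1) = real j"
    "real (length Q) \<le> real (length P)" "0 \<le> real (length P2)" "0 \<le> real (length Q)"
    using P12 longer by simp_all
  from SH P Q R w show ?thesis
  proof (cases rule: vertex_on_first_side_near)
    case (second_side Q1 Q2 v g)
    have "0 \<le> \<delta>" "real (length Q1) \<le> real (length Q)" "real (length Q2) \<le> real (length Q)"
      using second_side(1,5) of_nat_0_le_iff order_trans by (blast, simp_all)
    then have "real (length P2) + real (length Q1) \<le> ?s"
      "real (length P1) + real (length g) + real (length Q2) \<le> ?s"
      using j(1,2) lengths second_side(5) by argo+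
    then show ?thesis
      using tessellable_chord_first_to_second[OF P1 P2 second_side(2,3) R second_side(4)]
        tessellable_mono[of 3 5] P12(1) second_side(1) by simp
  next
    case (third_side R1 R2 v g)
    have "0 \<le> \<delta>" "real (length R1) \<le> real (length P + length Q)"
      using third_side(1,5) geodesic_length_le_triangle[OF P Q R] of_nat_0_le_iff order_trans
      by (blast, simp)
    then have "tessellable G ?s 3 (x, R1 @ g, w) (x, P1, w)"
      using j(1,2) lengths
      by (intro tessellable_short_second_side[OF SH third_side(2,4) P1 third_side(5)]) (argo, argo)
    moreover have "real (length g) + real (length P2) + real (length Q) \<le> ?s"
      using j(1,2) lengths third_side(5) \<open>0 \<le> \<delta>\<close> by argo
    ultimately have "tessellable G ?s (3 + 2) (x, P1 @ P2 @ Q, z) (x, R1 @ R2, z)"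
      by (rule tessellable_chord_third_to_first[OF _ third_side(2,4) P2 Q third_side(3)])
    then show ?thesis
      using P12(1) third_side(1) by simp
  qed
qed

lemma tessellable_long_second_side:
  assumes SH: "strongly_hyperbolic G \<delta>"
    and P: "geodesic G (x,P,y)" and Q: "geodesic G (y,Q,z)" and R: "geodesic G (x,R,z)"
    and longer: "length P \<le> length Q"
  shows "tessellable G (3/4 * real (length P + length Q) + 2 * \<delta> + 1) 5 (x, P @ Q, z) (x, R, z)"
    (is "tessellable G ?s 5 _ _")
proof -
  define t where "t = (length P + length Q + 3) div 4"
  have t: "real (length P + length Q) \<le> 4 * real t" "4 * real t \<le> real (length P + length Q) + 3"
    "length Q - t \<le> length Q" "t \<le> length Q"
    using longer unfolding t_def by linarith+
  obtain w Q1 Q2 where Q12: "Q = Q1 @ Q2" "length Q1 = length Q - t" and w: "w \<in> set (awalk_verts y Q)"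
    and Q1: "geodesic G (y,Q1,w)" and Q2: "geodesic G (w,Q2,z)"
    using geodesic_split_at_length[OF Q t(3)] .
  have lengths: "real (length P + length Q) = real (length P) + real (length Q)"
    "real (length Q) = real (length Q1) + real t" "real (length Q2) = real t"
    "real (length P) \<le> real (length Q)" "0 \<le> real (length P)" "0 \<le> real (length Q1)"
    using Q12 longer t(4) by simp_all
  from SH P Q R w show ?thesis
  proof (cases rule: vertex_on_second_side_near)
    case (first_side P1 P2 v g)
    have "0 \<le> \<delta>" "real (length P1) \<le> real (length P)" "real (length P2) \<le> real (length P)"
      using first_side(1,5) of_nat_0_le_iff order_trans by (blast, simp_all)
    then have "real (length P2) + real (length Q1) \<le> ?s"
      "real (length P1) + real (length g) + real (length Q2) \<le> ?s"
      using t(1,2) lengths first_side(5) by argo+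
    then show ?thesis
      using tessellable_chord_first_to_second[OF first_side(2,3) Q1 Q2 R first_side(4)]
        tessellable_mono[of 3 5] Q12(1) first_side(1) by simp
  next
    case (third_side R1 R2 v g)
    have "0 \<le> \<delta>" "real (length R2) \<le> real (length P + length Q)"
      using third_side(1,5) geodesic_length_le_triangle[OF P Q R] of_nat_0_le_iff order_trans
      by (blast, simp)
    then have "tessellable G ?s 3 (w, g @ R2, z) (w, Q2, z)"
      using t(1,2) lengths
      by (intro tessellable_short_first_side[OF SH third_side(4,3) Q2 third_side(5)]) (argo, argo)
    moreover have "real (length P) + real (length Q1) + real (length g) \<le> ?s"
      using t(1,2) lengths third_side(5) \<open>0 \<le> \<delta>\<close> by argo
    ultimately have "tessellable G ?s (3 + 2) (x, P @ Q1 @ Q2, z) (x, R1 @ R2, z)"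
      by (rule tessellable_chord_second_to_third[OF _ P Q1 third_side(4,2,3)])
    then show ?thesis
      using Q12(1) third_side(1) by simp
  qed
qed

lemma tessellable_geodesic_triangle:
  assumes "strongly_hyperbolic G \<delta>"
    and "geodesic G (x,P,y)" "geodesic G (y,Q,z)" "geodesic G (x,R,z)"
  shows "tessellable G (3/4 * real (length P + length Q) + 2 * \<delta> + 1) 5 (x, P @ Q, z) (x, R, z)"
  using tessellable_long_first_side[OF assms] tessellable_long_second_side[OF assms]
  by (cases "length Q \<le> length P") simp_all

end

theorem lemma5p4:
  fixes G :: "('a,'b) pre_digraph" and \<delta> :: real and T :: "('a,'b) dtriangle"
  assumes "wf_digraph G"
    and "\<delta> \<ge> 0"
    and "strongly_hyperbolic G \<delta>"
    and "geo_triangle G T"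
  shows "\<exists>Ts. length Ts = 5 \<and>
           (\<forall>T'\<in>set Ts. geo_triangle G T' \<and>
              real (tri_size T') \<le> 3/4 * real (tri_size T) + 2 * \<delta> + 1) \<and>
           tessellates_triangle G Ts T"
proof -
  interpret wf_digraph G by fact
  obtain x P y y' Q z x' R z' where T: "T = ((x,P,y),(y',Q,z),(x',R,z'))"
    by (metis prod_cases3)
  with assms(4) have P: "geodesic G (x,P,y)" and Q: "geodesic G (y,Q,z)" and R: "geodesic G (x,R,z)"
    by (auto simp: geo_triangle_def pstart_def pend_def)
  have "tessellable G (3/4 * real (tri_size T) + 2 * \<delta> + 1) 5 (x, P @ Q, z) (x, R, z)"
    using tessellable_geodesic_triangle[OF assms(3) P Q R] T
    by (simp add: tri_size_def plen_def parcs_def)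
  moreover have "tessellates_triangle G Ts T \<longleftrightarrow> homotopic G Ts (x, P @ Q, z) (x, R, z)" for Ts
    using T assms(4)
    by (auto simp: tessellates_triangle_def geo_triangle_def pcomp_def pstart_def parcs_def pend_def)
  moreover have "x \<in> verts G"
    using awalk_hd_in_verts[OF geodesic_awalk[OF P]] .
  ultimately show ?thesis
    using tessellation_if_tessellable[of _ 5 "(x, P @ Q, z)"] assms(2)
    by (simp add: pstart_def)
qed

end
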